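(* Let $n\ge 1$ and let $\mathcal{F}=(W,R)$ be a finite transitive frame of circumference at most $n$ all of whose final clusters are simple. Let $X_\mathcal{F}$ be the space constructed from $\mathcal{F}$ as described in the context. Then $X_\mathcal{F}$ is openly irresolvable.
   Context: Spaces: a space is $k$-resolvable if it has $k$ pairwise disjoint non-empty dense subsets; resolvable means 2-resolvable; irresolvable means not resolvable; $X$ is openly irresolvable if every non-empty open subspace is irresolvable. $S\subseteq X$ is crowded in $X$ if it has no isolated points as a subspace. Frames: for transitive $(W,R)$, clusters are equivalence classes of $\{(x,y):x=y\text{ or }xRyRx\}$; the cluster of $x$ is degenerate if $x$ is irreflexive, non-degenerate otherwise, and simple if it is a non-degenerate singleton; $CRC'$ for clusters iff $xRy$ for representatives, $CR^\uparrow C'$ iff $CRC'$ and not $C'RC$; $C$ is final if there is no $C'\ne C$ with $CRC'$. The circumference is the supremum of lengths $m$ of cycles $x_1R\cdots Rx_mRx_1$ of distinct points (0 if none). Auxiliary spaces: fix a non-principal ultrafilter $\mathcal{U}$ on $\omega$; $E$ is $\omega$ with open sets $\mathcal{U}\cup\{\emptyset\}$. For $k\ge1$, $X_k$ is $\omega\times\{1,\dots,k\}$ whose open sets are $\emptyset$ and all $\bigcup_{i=1}^k(O_i\times\{i\})$ with each $O_i$ a non-empty open subset of $E$; $S_i=\omega\times\{i\}$. $Y_k$ is the subspace of $X_k$ obtained by removing from $X_k$ the union of all subsets of $X_k$ that are $(k+1)$-resolvable as subspaces, with the $k$-partition $\{Y_k\cap S_i:1\le i\le k\}$ (for $k=1$,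 $Y_1=X_1$, a copy of $E$). Construction of $X_\mathcal{F}$: for each cluster $C$ choose a space $X_C$ partitioned as $\{X_w:w\in C\}$: if $C=\{w\}$ is degenerate, $X_C=X_w=\{w\}$; if $C=\{w_1,\dots,w_k\}$ is non-degenerate, $X_C$ is a copy of $Y_k$ with the cells $Y_k\cap S_1,\dots,Y_k\cap S_k$ labelled $X_{w_1},\dots,X_{w_k}$. The $X_C$ are pairwise disjoint. $X_\mathcal{F}=\bigcup_C X_C$, where $O\subseteq X_\mathcal{F}$ is open iff for every $C$, $O\cap X_C$ is open in $X_C$, and if $O\cap X_C\ne\emptyset$ then $X_{C'}\subseteq O$ for all $C'$ with $CR^\uparrow C'$. *)

theory Defs
  imports "HOL-Analysis.Analysis"
begin

definition k_resolvable :: "'a topology \<Rightarrow> nat \<Rightarrow> bool" where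
  "k_resolvable T k \<longleftrightarrow>
     (\<exists>D :: nat \<Rightarrow> 'a set.
        (\<forall>i<k. D i \<subseteq> topspace T \<and> D i \<noteq> {} \<and> T closure_of (D i) = topspace T) \<and>
        (\<forall>i<k. \<forall>j<k. i \<noteq> j \<longrightarrow> D i \<inter> D j = {}))"

definition resolvable :: "'a topology \<Rightarrow> bool" where
  "resolvable T \<longleftrightarrow> k_resolvable T 2"

definition openly_irresolvable :: "'a topology \<Rightarrow> bool" where
  "openly_irresolvable T \<longleftrightarrow>
     (\<forall>V. openin T V \<and> V \<noteq> {} \<longrightarrow> \<not> resolvable (subtopology T V))"

definition nonprincipal_ultrafilter :: "nat set set \<Rightarrow> bool" where
  "nonprincipal_ultrafilter U \<longleftrightarrow>
     UNIV \<in> U \<and> {} \<notin> U \<and>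
     (\<forall>A B. A \<in> U \<and> A \<subseteq> B \<longrightarrow> B \<in> U) \<and>
     (\<forall>A B. A \<in> U \<and> B \<in> U \<longrightarrow> A \<inter> B \<in> U) \<and>
     (\<forall>A. A \<in> U \<or> - A \<in> U) \<and>
     (\<forall>n. {n} \<notin> U)"

definition Etop :: "nat set set \<Rightarrow> nat topology" where
  "Etop U = topology (\<lambda>S. S \<in> U \<or> S = {})"

definition Xtop :: "nat set set \<Rightarrow> nat \<Rightarrow> (nat \<times> nat) topology" where
  "Xtop U k = topology (\<lambda>S. S \<subseteq> UNIV \<times> {1..k} \<and>
      (S = {} \<or> (\<forall>i\<in>{1..k}. {m. (m, i) \<in> S} \<noteq> {} \<and> openin (Etop U) {m. (m, i) \<in> S})))"

definition Yset :: "nat set set \<Rightarrow> nat \<Rightarrow> (nat \<times> nat) set" where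
  "Yset U k = topspace (Xtop U k) -
      \<Union>{A. A \<subseteq> topspace (Xtop U k) \<and> k_resolvable (subtopology (Xtop U k) A) (k + 1)}"

definition Ytop :: "nat set set \<Rightarrow> nat \<Rightarrow> (nat \<times> nat) topology" where
  "Ytop U k = subtopology (Xtop U k) (Yset U k)"

definition cluster_of :: "'w set \<Rightarrow> 'w rel \<Rightarrow> 'w \<Rightarrow> 'w set" where
  "cluster_of W R x = {y \<in> W. y = x \<or> ((x, y) \<in> R \<and> (y, x) \<in> R)}"

definition clusters :: "'w set \<Rightarrow> 'w rel \<Rightarrow> 'w set set" where
  "clusters W R = cluster_of W R ` W"

definition nondegenerate :: "'w rel \<Rightarrow> 'w set \<Rightarrow> bool" where
  "nondegenerate R C \<longleftrightarrow> (\<exists>x\<in>C. (x, x) \<in> R)"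

definition simple_cluster :: "'w rel \<Rightarrow> 'w set \<Rightarrow> bool" where
  "simple_cluster R C \<longleftrightarrow> nondegenerate R C \<and> card C = 1"

definition cl_rel :: "'w rel \<Rightarrow> 'w set \<Rightarrow> 'w set \<Rightarrow> bool" where
  "cl_rel R C C' \<longleftrightarrow> (\<exists>x\<in>C. \<exists>y\<in>C'. (x, y) \<in> R)"

definition cl_up :: "'w rel \<Rightarrow> 'w set \<Rightarrow> 'w set \<Rightarrow> bool" where
  "cl_up R C C' \<longleftrightarrow> cl_rel R C C' \<and> \<not> cl_rel R C' C"

definition final_cluster :: "'w set \<Rightarrow> 'w rel \<Rightarrow> 'w set \<Rightarrow> bool" where
  "final_cluster W R C \<longleftrightarrow> C \<in> clusters W R \<and>
     \<not> (\<exists>C'\<in>clusters W R. C' \<noteq> C \<and> cl_rel R C C')"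

definition is_cycle :: "'w set \<Rightarrow> 'w rel \<Rightarrow> 'w list \<Rightarrow> bool" where
  "is_cycle W R xs \<longleftrightarrow> xs \<noteq> [] \<and> distinct xs \<and> set xs \<subseteq> W \<and>
     (\<forall>i. Suc i < length xs \<longrightarrow> (xs ! i, xs ! Suc i) \<in> R) \<and>
     (last xs, hd xs) \<in> R"

definition circumference :: "'w set \<Rightarrow> 'w rel \<Rightarrow> nat" where
  "circumference W R = Sup (insert 0 {length xs | xs. is_cycle W R xs})"

text \<open>Points of X_F are pairs (w, m); the cell X_w is
  {(w,0)} if the cluster of w is degenerate, and otherwise the copy of
  Y_k \<inter> S_(idx w) (k = size of the cluster), where idx enumerates the cluster.\<close>
definition cell :: "nat set set \<Rightarrow> 'w set \<Rightarrow> 'w rel \<Rightarrow> ('w \<Rightarrow> nat) \<Rightarrow> 'w \<Rightarrow> ('w \<times> nat) set" where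
  "cell U W R idx w =
     (if nondegenerate R (cluster_of W R w)
      then {(w, m) | m. (m, idx w) \<in> Yset U (card (cluster_of W R w))}
      else {(w, 0)})"

definition XC :: "nat set set \<Rightarrow> 'w set \<Rightarrow> 'w rel \<Rightarrow> ('w \<Rightarrow> nat) \<Rightarrow> 'w set \<Rightarrow> ('w \<times> nat) set" where
  "XC U W R idx C = (\<Union>w\<in>C. cell U W R idx w)"

text \<open>Open sets of X_C: for a non-degenerate cluster, via the copy of Y_k;
  for a degenerate (singleton) cluster, the discrete topology on a point.\<close>
definition XC_open :: "nat set set \<Rightarrow> 'w set \<Rightarrow> 'w rel \<Rightarrow> ('w \<Rightarrow> nat) \<Rightarrow> 'w set \<Rightarrow> ('w \<times> nat) set \<Rightarrow> bool" where
  "XC_open U W R idx C V \<longleftrightarrow> V \<subseteq> XC U W R idx C \<and>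
     (nondegenerate R C \<longrightarrow> openin (Ytop U (card C)) ((\<lambda>(w, m). (m, idx w)) ` V))"

definition XF_set :: "nat set set \<Rightarrow> 'w set \<Rightarrow> 'w rel \<Rightarrow> ('w \<Rightarrow> nat) \<Rightarrow> ('w \<times> nat) set" where
  "XF_set U W R idx = (\<Union>C\<in>clusters W R. XC U W R idx C)"

definition XF_top :: "nat set set \<Rightarrow> 'w set \<Rightarrow> 'w rel \<Rightarrow> ('w \<Rightarrow> nat) \<Rightarrow> ('w \<times> nat) topology" where
  "XF_top U W R idx = topology (\<lambda>V. V \<subseteq> XF_set U W R idx \<and>
     (\<forall>C\<in>clusters W R.
        XC_open U W R idx C (V \<inter> XC U W R idx C) \<and>
        (V \<inter> XC U W R idx C \<noteq> {} \<longrightarrow>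
           (\<forall>C'\<in>clusters W R. cl_up R C C' \<longrightarrow> XC U W R idx C' \<subseteq> V))))"

end

theory Submission
  imports Defs
begin

(* A non-empty open set V of X_F meets some cell X_w. Climbing R from w to a maximal point v
   reaches a final cluster, which is simple, so X_v is a copy of the ultrafilter space E and the
   sets {v} x P with P in U are open in X_F. The cluster of w either is {v} or sees {v}
   strictly, and in both cases the trace of V on X_v is {v} x M with M in U. Consequently every
   dense subset of V has a trace on X_v that lies in U, and two disjoint dense subsets would
   produce two disjoint members of U. *)

lemma nonprincipal_ultrafilterD:
  assumes "nonprincipal_ultrafilter U"
  shows "UNIV \<in> U" "{} \<notin> U" "A \<in> U \<Longrightarrow> A \<subseteq> B \<Longrightarrow> B \<in> U"
    "A \<in> U \<Longrightarrow> B \<in> U \<Longrightarrow> A \<inter> B \<in> U" "A \<notin> U \<Longrightarrow> - A \<in> U"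
  using assms unfolding nonprincipal_ultrafilter_def by blast+

lemma dense_preimage_in_ultrafilter:
  assumes U: "nonprincipal_ultrafilter U"
    and opens: "\<And>P. P \<in> U \<Longrightarrow> openin (subtopology T S) (g ` P \<inter> S)"
    and dense: "subtopology T S closure_of D = topspace (subtopology T S)"
    and m: "g m \<in> topspace (subtopology T S)" "g m \<notin> D"
  shows "{a. g a \<in> D} \<in> U"
proof (rule ccontr)
  assume "{a. g a \<in> D} \<notin> U"
  then have "{a. g a \<notin> D} \<in> U"
    using nonprincipal_ultrafilterD(5)[OF U] by (simp add: Collect_neg_eq)
  then have "openin (subtopology T S) (g ` {a. g a \<notin> D} \<inter> S)" by (rule opens)
  moreover have "g m \<in> g ` {a. g a \<notin> D} \<inter> S" using m by auto
  moreover have "g m \<in> subtopology T S closure_of D" using dense m(1) by simp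
  ultimately obtain y where "y \<in> D" "y \<in> g ` {a. g a \<notin> D} \<inter> S" unfolding in_closure_of by meson
  then show False by blast
qed

lemma resolvableE:
  assumes "resolvable T"
  obtains D\<^sub>0 D\<^sub>1 where "D\<^sub>0 \<subseteq> topspace T" "D\<^sub>1 \<subseteq> topspace T" "D\<^sub>0 \<inter> D\<^sub>1 = {}"
    "T closure_of D\<^sub>0 = topspace T" "T closure_of D\<^sub>1 = topspace T"
proof -
  obtain D :: "nat \<Rightarrow> _" where D: "\<forall>i<2. D i \<subseteq> topspace T \<and> T closure_of D i = topspace T"
    and disjoint: "\<forall>i<2. \<forall>j<2. i \<noteq> j \<longrightarrow> D i \<inter> D j = {}"
    using assms unfolding resolvable_def k_resolvable_def by blast
  show thesis by (rule that[of "D 0" "D 1"]) (use D disjoint in auto)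
qed

lemma not_resolvable_if_ultrafilter_images_open:
  assumes U: "nonprincipal_ultrafilter U"
    and opens: "\<And>P. P \<in> U \<Longrightarrow> openin (subtopology T S) (g ` P \<inter> S)"
    and m: "g m \<in> topspace (subtopology T S)"
  shows "\<not> resolvable (subtopology T S)"
proof
  assume "resolvable (subtopology T S)"
  then obtain D\<^sub>0 D\<^sub>1 where D: "D\<^sub>0 \<subseteq> topspace (subtopology T S)" "D\<^sub>1 \<subseteq> topspace (subtopology T S)"
    and disjoint: "D\<^sub>0 \<inter> D\<^sub>1 = {}"
    and dense: "subtopology T S closure_of D\<^sub>0 = topspace (subtopology T S)"
      "subtopology T S closure_of D\<^sub>1 = topspace (subtopology T S)"
    by (rule resolvableE)
  have range_open: "openin (subtopology T S) (range g \<inter> S)"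
    using opens nonprincipal_ultrafilterD(1)[OF U] by blast
  have trace: "{a. g a \<in> D} \<in> U"
    if "subtopology T S closure_of D = topspace (subtopology T S)"
      "D' \<subseteq> topspace (subtopology T S)"
      "subtopology T S closure_of D' = topspace (subtopology T S)" "D \<inter> D' = {}" for D D'
  proof -
    have "g m \<in> subtopology T S closure_of D'" using that(3) m by simp
    moreover have "g m \<in> range g \<inter> S" using m by simp
    ultimately obtain y where "y \<in> D'" "y \<in> range g \<inter> S"
      using range_open unfolding in_closure_of by meson
    then obtain a where "g a \<in> D'" by blast
    then have "g a \<in> topspace (subtopology T S)" "g a \<notin> D" using that(2,4) by blast+
    then show ?thesis using dense_preimage_in_ultrafilter[OF U opens that(1)] by blast
  qed
  have "{a. g a \<in> D\<^sub>0} \<inter> {a. g a \<in> D\<^sub>1} \<in> U"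
    using trace[OF dense(1) D(2) dense(2)] trace[OF dense(2) D(1) dense(1)] disjoint
      nonprincipal_ultrafilterD(4)[OF U]
    by (simp add: Int_commute)
  moreover have "{a. g a \<in> D\<^sub>0} \<inter> {a. g a \<in> D\<^sub>1} = {}" using disjoint by blast
  ultimately show False using nonprincipal_ultrafilterD(2)[OF U] by simp
qed

lemma openin_Etop:
  assumes U: "nonprincipal_ultrafilter U"
  shows "openin (Etop U) S \<longleftrightarrow> S \<in> U \<or> S = {}"
proof -
  have "istopology (\<lambda>S. S \<in> U \<or> S = {})"
    unfolding istopology_def
  proof (intro conjI allI impI)
    fix S T assume "S \<in> U \<or> S = {}" "T \<in> U \<or> T = {}"
    then show "S \<inter> T \<in> U \<or> S \<inter> T = {}" using nonprincipal_ultrafilterD(4)[OF U] by blast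
  next
    fix K :: "nat set set" assume "\<forall>S\<in>K. S \<in> U \<or> S = {}"
    then show "\<Union>K \<in> U \<or> \<Union>K = {}"
      using nonprincipal_ultrafilterD(3)[OF U, of _ "\<Union>K"] by blast
  qed
  then show ?thesis unfolding Etop_def by simp
qed

lemma openin_Xtop:
  assumes U: "nonprincipal_ultrafilter U"
  shows "openin (Xtop U k) S \<longleftrightarrow>
    S \<subseteq> UNIV \<times> {1..k} \<and> (S = {} \<or> (\<forall>i\<in>{1..k}. {m. (m, i) \<in> S} \<in> U))"
    (is "_ \<longleftrightarrow> ?open S")
proof -
  have "?open (S \<inter> T)" if "?open S" "?open T" for S T
  proof -
    have "{m. (m, i) \<in> S \<inter> T} = {m. (m, i) \<in> S} \<inter> {m. (m, i) \<in> T}" for i by blast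
    then show ?thesis using that nonprincipal_ultrafilterD(4)[OF U] by auto
  qed
  moreover have "?open (\<Union>K)" if K: "\<forall>S\<in>K. ?open S" for K
  proof (cases "\<Union>K = {}")
    case False
    then obtain S where "S \<in> K" "S \<noteq> {}" by blast
    then have "{m. (m, i) \<in> S} \<in> U" if "i \<in> {1..k}" for i using K that by blast
    moreover have "{m. (m, i) \<in> S} \<subseteq> {m. (m, i) \<in> \<Union>K}" for i using \<open>S \<in> K\<close> by blast
    ultimately have "\<forall>i\<in>{1..k}. {m. (m, i) \<in> \<Union>K} \<in> U"
      using nonprincipal_ultrafilterD(3)[OF U] by blast
    moreover have "\<Union>K \<subseteq> UNIV \<times> {1..k}" using K by blast
    ultimately show ?thesis by blast
  qed (use K in blast)
  ultimately have "istopology ?open" unfolding istopology_def by blast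
  moreover have Etop_iff: "X \<noteq> {} \<and> openin (Etop U) X \<longleftrightarrow> X \<in> U" for X
    using nonprincipal_ultrafilterD(2)[OF U] by (auto simp: openin_Etop[OF U])
  ultimately show ?thesis unfolding Xtop_def Etop_iff by simp
qed

lemma topspace_Xtop:
  assumes U: "nonprincipal_ultrafilter U"
  shows "topspace (Xtop U k) = UNIV \<times> {1..k}"
proof
  show "topspace (Xtop U k) \<subseteq> UNIV \<times> {1..k}"
    unfolding topspace_def using openin_Xtop[OF U] by blast
  show "UNIV \<times> {1..k} \<subseteq> topspace (Xtop U k)"
    using openin_Xtop[OF U] nonprincipal_ultrafilterD(1)[OF U] by (intro openin_subset) auto
qed

lemma k_resolvable_topspace_nonempty:
  assumes "k_resolvable T k" "k > 0"
  shows "topspace T \<noteq> {}"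
  using assms unfolding k_resolvable_def by blast

lemma Xtop_1_not_resolvable:
  assumes U: "nonprincipal_ultrafilter U" and "A \<subseteq> UNIV \<times> {1}"
  shows "\<not> resolvable (subtopology (Xtop U 1) A)"
proof
  assume resolvable: "resolvable (subtopology (Xtop U 1) A)"
  let ?g = "\<lambda>m. (m, 1::nat)"
  have "openin (Xtop U 1) (?g ` P)" if "P \<in> U" for P
    using that unfolding openin_Xtop[OF U] by (auto simp: image_iff)
  then have "openin (subtopology (Xtop U 1) A) (?g ` P \<inter> A)" if "P \<in> U" for P
    using that by (simp add: openin_subtopology_Int)
  moreover have "topspace (subtopology (Xtop U 1) A) \<noteq> {}"
    using k_resolvable_topspace_nonempty[of _ 2] resolvable unfolding resolvable_def by (metis pos2)
  then obtain a where "a \<in> topspace (subtopology (Xtop U 1) A)" by blast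
  then have "?g (fst a) \<in> topspace (subtopology (Xtop U 1) A)"
    using assms(2) by force
  ultimately have "\<not> resolvable (subtopology (Xtop U 1) A)"
    by (rule not_resolvable_if_ultrafilter_images_open[OF U])
  then show False using resolvable by contradiction
qed

lemma Yset_1:
  assumes U: "nonprincipal_ultrafilter U"
  shows "Yset U 1 = UNIV \<times> {1}"
  using Xtop_1_not_resolvable[OF U]
  unfolding Yset_def topspace_Xtop[OF U] resolvable_def one_add_one by auto

lemma Ytop_1:
  assumes U: "nonprincipal_ultrafilter U"
  shows "Ytop U 1 = Xtop U 1"
  using topspace_Xtop[OF U, of 1] unfolding Ytop_def Yset_1[OF U]
  by (metis atLeastAtMost_singleton subtopology_topspace)

lemma cluster_of_eq:
  assumes "trans R" "b \<in> cluster_of W R a"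
  shows "cluster_of W R b = cluster_of W R a"
  using assms unfolding cluster_of_def trans_def by blast

lemma self_in_cluster_of: "v \<in> W \<Longrightarrow> v \<in> cluster_of W R v"
  unfolding cluster_of_def by blast

lemma clusters_eq_cluster_of:
  assumes "trans R" "C \<in> clusters W R" "v \<in> C"
  shows "C = cluster_of W R v"
  using assms cluster_of_eq unfolding clusters_def by fastforce

lemma clusters_subset: "C \<in> clusters W R \<Longrightarrow> C \<subseteq> W"
  unfolding clusters_def cluster_of_def by blast

lemma finite_trans_obtains_maximal_successor:
  assumes "finite R" "trans R"
  obtains v where "v = w \<or> (w, v) \<in> R" "\<And>u. (v, u) \<in> R \<Longrightarrow> (u, v) \<in> R"
proof -
  define S where "S = R - R\<inverse>"
  have "trans S"
    using \<open>trans R\<close> unfolding S_def trans_def by blast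
  then have "acyclic S"
    unfolding acyclic_def trancl_id[OF \<open>trans S\<close>] by (simp add: S_def)
  then have wf: "wf (S\<inverse>)"
    using \<open>finite R\<close> by (intro finite_acyclic_wf_converse) (simp_all add: S_def)
  obtain v where v: "v \<in> {v. v = w \<or> (w, v) \<in> R}"
    and maximal: "\<And>u. (u, v) \<in> S\<inverse> \<Longrightarrow> u \<notin> {v. v = w \<or> (w, v) \<in> R}"
    using wfE_min[OF wf, of w "{v. v = w \<or> (w, v) \<in> R}"] by blast
  have "(u, v) \<in> R" if "(v, u) \<in> R" for u
    using v maximal[of u] that \<open>trans R\<close> unfolding S_def trans_def by blast
  with v show thesis using that by blast
qed

lemma final_cluster_of_maximal:
  assumes "trans R" "v \<in> W" "\<And>u. (v, u) \<in> R \<Longrightarrow> (u, v) \<in> R"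
  shows "final_cluster W R (cluster_of W R v)"
  unfolding final_cluster_def
proof (intro conjI notI)
  show "cluster_of W R v \<in> clusters W R" unfolding clusters_def using assms(2) by blast
next
  assume "\<exists>C\<in>clusters W R. C \<noteq> cluster_of W R v \<and> cl_rel R (cluster_of W R v) C"
  then obtain C x y where C: "C \<in> clusters W R" "C \<noteq> cluster_of W R v"
    and xy: "x \<in> cluster_of W R v" "y \<in> C" "(x, y) \<in> R"
    unfolding cl_rel_def by blast
  have "(v, y) \<in> R" using xy assms(1) unfolding cluster_of_def trans_def by blast
  then have "y \<in> cluster_of W R v"
    using assms(3) clusters_subset[OF C(1)] xy(2) unfolding cluster_of_def by blast
  then show False
    using C clusters_eq_cluster_of[OF assms(1) C(1) xy(2)] cluster_of_eq[OF assms(1)] by metis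
qed

lemma cl_up_cluster_of:
  assumes "trans R" "(w, v) \<in> R" "w \<in> W" "v \<in> W" "cluster_of W R w \<noteq> cluster_of W R v"
  shows "cl_up R (cluster_of W R w) (cluster_of W R v)"
  unfolding cl_up_def
proof (intro conjI notI)
  show "cl_rel R (cluster_of W R w) (cluster_of W R v)"
    using assms self_in_cluster_of unfolding cl_rel_def by metis
next
  assume "cl_rel R (cluster_of W R v) (cluster_of W R w)"
  then have "(v, w) \<in> R" using assms(1) unfolding cl_rel_def cluster_of_def trans_def by blast
  then have "w \<in> cluster_of W R v" using assms(2,3) unfolding cluster_of_def by blast
  then show False using assms(5) cluster_of_eq[OF assms(1)] by blast
qed

lemma XC_subset: "XC U W R idx C \<subseteq> C \<times> UNIV"
  unfolding XC_def cell_def by auto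

lemma XC_open_Int:
  assumes "nondegenerate R C \<Longrightarrow> inj_on idx C"
    and "XC_open U W R idx C A" "XC_open U W R idx C B"
  shows "XC_open U W R idx C (A \<inter> B)"
proof -
  let ?\<phi> = "\<lambda>(w, m). (m, idx w)"
  have "inj_on ?\<phi> (XC U W R idx C)" if "nondegenerate R C"
    using assms(1)[OF that] XC_subset[of U W R idx C] unfolding inj_on_def by auto
  then have "?\<phi> ` (A \<inter> B) = ?\<phi> ` A \<inter> ?\<phi> ` B" if "nondegenerate R C"
    using assms(2,3) that unfolding XC_open_def by (intro inj_on_image_Int) auto
  then show ?thesis using assms(2,3) unfolding XC_open_def by (auto intro: openin_Int)
qed

lemma XC_open_Union:
  assumes "\<And>A. A \<in> K \<Longrightarrow> XC_open U W R idx C A"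
  shows "XC_open U W R idx C (\<Union>K)"
proof -
  let ?\<phi> = "\<lambda>(w, m). (m, idx w)"
  have "?\<phi> ` \<Union>K = \<Union>((\<lambda>A. ?\<phi> ` A) ` K)" by blast
  then show ?thesis using assms unfolding XC_open_def by (auto intro: openin_Union)
qed

lemma openin_XF_top:
  assumes "\<forall>C\<in>clusters W R. nondegenerate R C \<longrightarrow> inj_on idx C"
  shows "openin (XF_top U W R idx) V \<longleftrightarrow> V \<subseteq> XF_set U W R idx \<and>
     (\<forall>C\<in>clusters W R.
        XC_open U W R idx C (V \<inter> XC U W R idx C) \<and>
        (V \<inter> XC U W R idx C \<noteq> {} \<longrightarrow>
           (\<forall>C'\<in>clusters W R. cl_up R C C' \<longrightarrow> XC U W R idx C' \<subseteq> V)))"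
    (is "_ \<longleftrightarrow> ?open V")
proof -
  have "?open (S \<inter> T)" if S: "?open S" and T: "?open T" for S T
  proof -
    have "XC_open U W R idx C (S \<inter> T \<inter> XC U W R idx C)" if "C \<in> clusters W R" for C
    proof -
      have "S \<inter> T \<inter> XC U W R idx C = (S \<inter> XC U W R idx C) \<inter> (T \<inter> XC U W R idx C)" by blast
      then show ?thesis using S T that XC_open_Int[OF assms[rule_format, OF that]] by simp
    qed
    then show ?thesis using S T by blast
  qed
  moreover have "?open (\<Union>K)" if K: "\<forall>S\<in>K. ?open S" for K
  proof -
    have "XC_open U W R idx C (\<Union>K \<inter> XC U W R idx C)" if "C \<in> clusters W R" for C
    proof -
      have eq: "\<Union>K \<inter> XC U W R idx C = \<Union>((\<lambda>S. S \<inter> XC U W R idx C) ` K)" by blast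
      show ?thesis unfolding eq by (rule XC_open_Union) (use K that in blast)
    qed
    moreover have "XC U W R idx C' \<subseteq> \<Union>K"
      if C: "C \<in> clusters W R" "\<Union>K \<inter> XC U W R idx C \<noteq> {}" "C' \<in> clusters W R" "cl_up R C C'"
      for C C'
    proof -
      obtain S where "S \<in> K" "S \<inter> XC U W R idx C \<noteq> {}" using C(2) by blast
      then show ?thesis using K C by blast
    qed
    moreover have "\<Union>K \<subseteq> XF_set U W R idx" using K by blast
    ultimately show ?thesis by blast
  qed
  ultimately have "istopology ?open" unfolding istopology_def by blast
  then show ?thesis unfolding XF_top_def by simp
qed

lemma XC_simple_cluster:
  assumes U: "nonprincipal_ultrafilter U"
    and "cluster_of W R v = {v}" "(v, v) \<in> R" "idx v = 1"
  shows "XC U W R idx {v} = range (Pair v)"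
  using assms Yset_1[OF U] unfolding XC_def cell_def nondegenerate_def by auto

lemma XC_open_simple_cluster:
  assumes U: "nonprincipal_ultrafilter U"
    and "cluster_of W R v = {v}" "(v, v) \<in> R" "idx v = 1"
  shows "XC_open U W R idx {v} (Pair v ` M) \<longleftrightarrow> M \<in> U \<or> M = {}"
proof -
  have image: "(\<lambda>(w, m). (m, idx w)) ` Pair v ` M = M \<times> {1}"
    using assms(4) by force
  have card: "card {v} = 1" by simp
  have "nondegenerate R {v}" using assms(3) unfolding nondegenerate_def by blast
  moreover have "Pair v ` M \<subseteq> XC U W R idx {v}"
    using XC_simple_cluster[where idx = idx, OF assms] by blast
  moreover have "{m. (m, 1) \<in> M \<times> {1::nat}} = M" by blast
  ultimately show ?thesis
    unfolding XC_open_def card image Ytop_1[OF U] openin_Xtop[OF U] by auto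
qed

lemma final_simple_cluster_above:
  assumes "finite W" "R \<subseteq> W \<times> W" "trans R" "w \<in> W"
    and final_simple: "\<forall>C. final_cluster W R C \<longrightarrow> simple_cluster R C"
    and idx: "\<forall>C\<in>clusters W R. nondegenerate R C \<longrightarrow> bij_betw idx C {1..card C}"
  obtains v where "v = w \<or> (w, v) \<in> R" "v \<in> W" "cluster_of W R v = {v}"
    "final_cluster W R {v}" "(v, v) \<in> R" "idx v = 1"
proof -
  have "finite R" using assms(1,2) by (meson finite_SigmaI finite_subset)
  then obtain v where v: "v = w \<or> (w, v) \<in> R" and maximal: "\<And>u. (v, u) \<in> R \<Longrightarrow> (u, v) \<in> R"
    using finite_trans_obtains_maximal_successor[OF _ assms(3), of w] by blast
  have "v \<in> W" using v assms(2,4) by blast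
  then have final: "final_cluster W R (cluster_of W R v)"
    by (rule final_cluster_of_maximal[OF assms(3) _ maximal])
  then have simple: "simple_cluster R (cluster_of W R v)" using final_simple by blast
  have single: "cluster_of W R v = {v}"
    using simple self_in_cluster_of[OF \<open>v \<in> W\<close>] unfolding simple_cluster_def
    by (metis card_1_singletonE singletonD)
  then have nondeg: "nondegenerate R {v}" using simple unfolding simple_cluster_def by simp
  have "{v} \<in> clusters W R" using final single unfolding final_cluster_def by simp
  then have "bij_betw idx {v} {1..card {v}}" using idx nondeg by blast
  then have "idx v = 1" unfolding bij_betw_def by simp
  moreover have "(v, v) \<in> R" using nondeg unfolding nondegenerate_def by simp
  ultimately show thesis using that v \<open>v \<in> W\<close> single final by simp
qed

lemma openin_XF_top_final_point:
  assumes U: "nonprincipal_ultrafilter U"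
    and inj: "\<forall>C\<in>clusters W R. nondegenerate R C \<longrightarrow> inj_on idx C"
    and "trans R" "final_cluster W R {v}" "cluster_of W R v = {v}" "(v, v) \<in> R" "idx v = 1"
    and "M \<in> U"
  shows "openin (XF_top U W R idx) (Pair v ` M)"
proof -
  have v_cluster: "{v} \<in> clusters W R" using assms(4) unfolding final_cluster_def by blast
  have XC_v: "XC U W R idx {v} = range (Pair v)"
    by (rule XC_simple_cluster[where idx = idx, OF U assms(5-7)])
  have other_cluster: "C = {v}" if "C \<in> clusters W R" "Pair v ` M \<inter> XC U W R idx C \<noteq> {}" for C
  proof -
    have "v \<in> C" using that(2) XC_subset[of U W R idx C] by auto
    then show ?thesis using clusters_eq_cluster_of[OF assms(3) that(1)] assms(5) by simp
  qed
  show ?thesis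
    unfolding openin_XF_top[OF inj]
  proof (intro conjI ballI impI)
    show "Pair v ` M \<subseteq> XF_set U W R idx"
      using v_cluster XC_v unfolding XF_set_def by blast
  next
    fix C assume C: "C \<in> clusters W R"
    show "XC_open U W R idx C (Pair v ` M \<inter> XC U W R idx C)"
    proof (cases "Pair v ` M \<inter> XC U W R idx C = {}")
      case False
      then have "C = {v}" by (rule other_cluster[OF C])
      moreover have "Pair v ` M \<inter> XC U W R idx {v} = Pair v ` M" using XC_v by blast
      ultimately show ?thesis
        using XC_open_simple_cluster[where idx = idx, OF U assms(5-7)] \<open>M \<in> U\<close> by simp
    qed (simp add: XC_open_def)
  next
    fix C C' assume "C \<in> clusters W R" "Pair v ` M \<inter> XC U W R idx C \<noteq> {}"
      and "C' \<in> clusters W R" "cl_up R C C'"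
    then have "C' \<noteq> {v}" "cl_rel R {v} C'" using other_cluster unfolding cl_up_def by auto
    then show "XC U W R idx C' \<subseteq> Pair v ` M"
      using assms(4) \<open>C' \<in> clusters W R\<close> unfolding final_cluster_def by blast
  qed
qed

lemma openin_XF_top_trace_final_point:
  assumes U: "nonprincipal_ultrafilter U"
    and "finite W" "R \<subseteq> W \<times> W" "trans R"
    and final_simple: "\<forall>C. final_cluster W R C \<longrightarrow> simple_cluster R C"
    and idx: "\<forall>C\<in>clusters W R. nondegenerate R C \<longrightarrow> bij_betw idx C {1..card C}"
    and V: "openin (XF_top U W R idx) V" "V \<noteq> {}"
  obtains v M where "M \<in> U" "V \<inter> range (Pair v) = Pair v ` M"
    "\<And>P. P \<in> U \<Longrightarrow> openin (XF_top U W R idx) (Pair v ` P)"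
proof -
  have inj: "\<forall>C\<in>clusters W R. nondegenerate R C \<longrightarrow> inj_on idx C"
    using idx bij_betw_imp_inj_on by blast
  note V_open = V(1)[unfolded openin_XF_top[OF inj]]
  obtain p where "p \<in> V" using V(2) by blast
  then obtain C\<^sub>0 where C\<^sub>0: "C\<^sub>0 \<in> clusters W R" "p \<in> XC U W R idx C\<^sub>0"
    using V_open unfolding XF_set_def by blast
  define w where "w = fst p"
  have "w \<in> C\<^sub>0" using C\<^sub>0(2) XC_subset[of U W R idx C\<^sub>0] unfolding w_def by auto
  then have "w \<in> W" and C\<^sub>0_eq: "C\<^sub>0 = cluster_of W R w"
    using clusters_subset[OF C\<^sub>0(1)] clusters_eq_cluster_of[OF assms(4) C\<^sub>0(1)] by auto
  obtain v where v: "v = w \<or> (w, v) \<in> R" "v \<in> W" "cluster_of W R v = {v}"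
    "final_cluster W R {v}" "(v, v) \<in> R" "idx v = 1"
    using final_simple_cluster_above[OF assms(2-4) \<open>w \<in> W\<close> final_simple idx] by blast
  have XC_v: "XC U W R idx {v} = range (Pair v)"
    by (rule XC_simple_cluster[where idx = idx, OF U v(3,5,6)])
  define M where "M = {m. (v, m) \<in> V}"
  have trace: "V \<inter> range (Pair v) = Pair v ` M" unfolding M_def by auto
  have "M \<in> U"
  proof (cases "C\<^sub>0 = {v}")
    case True
    then have "XC_open U W R idx {v} (Pair v ` M)" and "p \<in> Pair v ` M"
      using V_open C\<^sub>0 \<open>p \<in> V\<close> XC_v trace by auto
    then show ?thesis using XC_open_simple_cluster[where idx = idx, OF U v(3,5,6)] by blast
  next
    case False
    then have "(w, v) \<in> R" using v(1,3) C\<^sub>0_eq by blast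
    then have "cl_up R C\<^sub>0 {v}"
      using cl_up_cluster_of[OF assms(4) _ \<open>w \<in> W\<close> v(2)] C\<^sub>0_eq False v(3) by simp
    moreover have "V \<inter> XC U W R idx C\<^sub>0 \<noteq> {}" using C\<^sub>0(2) \<open>p \<in> V\<close> by blast
    moreover have "{v} \<in> clusters W R" using v(4) unfolding final_cluster_def by blast
    ultimately have "XC U W R idx {v} \<subseteq> V" using V_open C\<^sub>0(1) by blast
    then have "range (Pair v) \<subseteq> V" unfolding XC_v .
    then have "M = UNIV" unfolding M_def by blast
    then show ?thesis using nonprincipal_ultrafilterD(1)[OF U] by simp
  qed
  then show thesis
    using that trace openin_XF_top_final_point[OF U inj assms(4) v(4,3,5,6)] by blast
qed

theorem lemma9:
  fixes U :: "nat set set" and W :: "'w set" and R :: "'w rel"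
    and idx :: "'w \<Rightarrow> nat" and n :: nat
  assumes "nonprincipal_ultrafilter U"
    and "n \<ge> 1"
    and "finite W" and "R \<subseteq> W \<times> W" and "trans R"
    and "circumference W R \<le> n"
    and "\<forall>C. final_cluster W R C \<longrightarrow> simple_cluster R C"
    and "\<forall>C\<in>clusters W R. nondegenerate R C \<longrightarrow> bij_betw idx C {1..card C}"
  shows "openly_irresolvable (XF_top U W R idx)"
  unfolding openly_irresolvable_def
proof (intro allI impI; elim conjE)
  fix V assume V: "openin (XF_top U W R idx) V" "V \<noteq> {}"
  obtain v M where M: "M \<in> U" "V \<inter> range (Pair v) = Pair v ` M"
    and opens: "\<And>P. P \<in> U \<Longrightarrow> openin (XF_top U W R idx) (Pair v ` P)"
    using openin_XF_top_trace_final_point[OF assms(1,3,4,5,7,8) V] by metis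
  have "openin (subtopology (XF_top U W R idx) V) (Pair v ` P \<inter> V)" if "P \<in> U" for P
  proof -
    have "Pair v ` P \<inter> V = Pair v ` (P \<inter> M)" using M(2) by auto
    moreover have "P \<inter> M \<in> U" using that M(1) nonprincipal_ultrafilterD(4)[OF assms(1)] by blast
    ultimately show ?thesis using opens subset_openin_subtopology by (metis inf_le2)
  qed
  moreover obtain m where "m \<in> M"
    using M(1) nonprincipal_ultrafilterD(2)[OF assms(1)] by (metis ex_in_conv)
  then have "Pair v m \<in> topspace (subtopology (XF_top U W R idx) V)"
    using M(2) openin_subset[OF V(1)] by auto
  ultimately show "\<not> resolvable (subtopology (XF_top U W R idx) V)"
    by (rule not_resolvable_if_ultrafilter_images_open[OF assms(1)])
qed

end
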